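(* Consider the FlexPD-F iterates described in the context with $\alpha,\beta>0$ and integer $T\ge1$, and let $U=I-\alpha B$. If $U\succ 0$, i.e. $\alpha<1/\rho(B)$, then for every $p>1$ and every $k\ge0$, \[\|x^{k+1,T-1}-x^*\|_U^2+\frac{\alpha}{\beta}\|\lambda^k-\lambda^*\|^2\le \Gamma_F^{T-1}\Big(\|x^k-x^*\|_U^2+\frac{\alpha}{\beta}\|\lambda^k-\lambda^*\|^2\Big),\] where \[\Gamma_F=\max\Big\{1+\frac{p\alpha\beta\rho(AA')}{p-1},\; p\Big(\sqrt{\rho(U)}+\alpha L\sqrt{\rho(U^{-1})}\Big)^2\Big\}.\]
   Context: Setting: $n$ agents are connected by a connected undirected graph with edge set $\mathcal E$, $\epsilon=|\mathcal E|$. For $x\in\mathbb R^n$ let $f(x)=\sum_{i=1}^n f_i(x_i)$, where each $f_i:\mathbb R\to\mathbb R$ is twice differentiable with $m\le f_i''\le L$ for constants $0<m\le L$; $\nabla f(x)=(f_1'(x_1),\dots,f_n'(x_n))'$. $A\in\mathbb R^{\epsilon\times n}$ is the edge–node incidence matrix (null space spanned by the all-ones vector). $B\in\mathbb R^{n\times n}$ is symmetric positive semidefinite with the same null space as $A$, off-diagonal entries nonzero only on edges. $x^*$ is the unique minimizer of $f$ subject to $Ax=0$ and $\lambda^*$ a Lagrange multiplier with $\nabla f(x^* )+A'\lambda^*=0$, $Ax^*=0$, $Bx^*=0$, chosen in the column space of $A$. FlexPD-F: given $\alpha,\beta>0$, $T\ge1$, $x^0$ arbitrary, $\lambda^0=0$;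 for $k\ge0$: $x^{k+1,0}=x^k$, $x^{k+1,t}=(I-\alpha B)x^{k+1,t-1}-\alpha\nabla f(x^{k+1,t-1})-\alpha A'\lambda^k$ for $t=1,\dots,T$, $x^{k+1}=x^{k+1,T}$, $\lambda^{k+1}=\lambda^k+\beta Ax^{k+1}$. Notation: $\rho(S)$ is the largest eigenvalue of a symmetric matrix $S$ (if $B=0$, $1/\rho(B)=\infty$); $\|v\|_S^2=v'Sv$; $\|\cdot\|$ is the Euclidean norm. *)

theory Defs
  imports "HOL-Analysis.Analysis"
begin

definition lambda_max :: "real^'n^'n \<Rightarrow> real" where
  "lambda_max S = Max {l. \<exists>v. v \<noteq> 0 \<and> S *v v = l *s v}"

definition qnorm :: "real^'n^'n \<Rightarrow> real^'n \<Rightarrow> real" where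
  "qnorm S v = v \<bullet> (S *v v)"

text \<open>Edge-node incidence matrix of the graph whose edge e joins src e and dst e
  (arbitrary orientation).\<close>
definition incidence :: "('e \<Rightarrow> 'n) \<Rightarrow> ('e \<Rightarrow> 'n) \<Rightarrow> real^'n^'e" where
  "incidence src dst = (\<chi> e i. if i = src e then 1 else if i = dst e then -1 else 0)"

definition adjacent :: "('e::finite \<Rightarrow> 'n) \<Rightarrow> ('e \<Rightarrow> 'n) \<Rightarrow> 'n \<Rightarrow> 'n \<Rightarrow> bool" where
  "adjacent src dst i j = (\<exists>e. (src e = i \<and> dst e = j) \<or> (src e = j \<and> dst e = i))"

definition fsum :: "('n::finite \<Rightarrow> real \<Rightarrow> real) \<Rightarrow> real^'n \<Rightarrow> real" where
  "fsum f x = (\<Sum>i\<in>UNIV. f i (x $ i))"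

definition grad :: "('n \<Rightarrow> real \<Rightarrow> real) \<Rightarrow> real^'n \<Rightarrow> real^'n" where
  "grad f' x = (\<chi> i. f' i (x $ i))"

text \<open>Inner loop of FlexPD-F: x^{k+1,t} starting from x^{k+1,0} = x with multiplier lam.\<close>
fun flexpd_inner :: "real \<Rightarrow> real^'n^'n \<Rightarrow> ('n \<Rightarrow> real \<Rightarrow> real) \<Rightarrow> real^'n^'e
    \<Rightarrow> real^'e \<Rightarrow> real^'n \<Rightarrow> nat \<Rightarrow> real^'n" where
  "flexpd_inner \<alpha> B f' A lam x 0 = x"
| "flexpd_inner \<alpha> B f' A lam x (Suc t) =
     (let y = flexpd_inner \<alpha> B f' A lam x t in
      (mat 1 - \<alpha> *\<^sub>R B) *v y - \<alpha> *\<^sub>R grad f' y - \<alpha> *\<^sub>R (transpose A *v lam))"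

end

theory Submission
  imports Defs
begin

(* While the inner loop runs, the multiplier lam k is frozen, so x^{k+1,t} iterates the map
   y |-> U y - alpha grad f(y) - alpha A' lam k.  By the KKT conditions and B xs = 0 its error
   e = y - xs satisfies
     e' = (U e - alpha (grad f(y) - grad f(xs))) - alpha A' (lam k - ls).
   Measured in the U-norm, the first part is at most (sqrt rho(U) + alpha L sqrt rho(U^-1)) |e|_U,
   because |U e|_U^2 <= rho(U) |e|_U^2, U <= I, grad f is L-Lipschitz and |e|^2 <= rho(U^-1) |e|_U^2;
   the second part is at most alpha^2 rho(AA') |lam k - ls|^2.  Young's inequality
   |a + b|_U^2 <= p |a|_U^2 + p/(p-1) |b|_U^2 then shows that each inner step multiplies
   |e|_U^2 + alpha/beta |lam k - ls|^2 by at most Gamma_F. *)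

lemma add_square_le_weighted:
  fixes s t p :: real
  assumes "1 < p"
  shows "(s + t)\<^sup>2 \<le> p * s\<^sup>2 + p / (p - 1) * t\<^sup>2"
proof -
  have "p * s\<^sup>2 + p / (p - 1) * t\<^sup>2 - (s + t)\<^sup>2 = ((p - 1) * s - t)\<^sup>2 / (p - 1)"
    using assms by (simp add: field_simps power2_eq_square)
  also have "\<dots> \<ge> 0" using assms by simp
  finally show ?thesis by simp
qed

locale psd_operator =
  fixes F :: "'a::real_inner \<Rightarrow> 'a"
  assumes linear: "linear F"
    and self_adjoint: "F u \<bullet> w = u \<bullet> F w"
    and nonneg: "0 \<le> u \<bullet> F u"
begin

lemma quadratic_add: "(a + b) \<bullet> F (a + b) = a \<bullet> F a + 2 * (a \<bullet> F b) + b \<bullet> F b"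
  using self_adjoint[of b a]
  by (simp add: linear_add[OF linear] inner_add_left inner_add_right inner_commute)

lemma quadratic_scaleR: "(c *\<^sub>R a) \<bullet> F (c *\<^sub>R a) = c\<^sup>2 * (a \<bullet> F a)"
  by (simp add: linear_scale[OF linear] power2_eq_square)

lemma cauchy_schwarz: "(a \<bullet> F b)\<^sup>2 \<le> (a \<bullet> F a) * (b \<bullet> F b)"
proof -
  define P X R where "P = a \<bullet> F a" and "X = a \<bullet> F b" and "R = b \<bullet> F b"
  have along_line: "0 \<le> P + 2 * t * X + t\<^sup>2 * R" for t
    using nonneg[of "a + t *\<^sub>R b"] unfolding quadratic_add quadratic_scaleR P_def X_def R_def
    by (simp add: linear_scale[OF linear] power2_eq_square mult.assoc)
  show ?thesis
  proof (cases "R = 0")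
    case True
    have "X = 0"
    proof (rule ccontr)
      assume "X \<noteq> 0"
      then have "P + 2 * (-(P + 1) / (2 * X)) * X = -1" by (simp add: field_simps)
      then show False using along_line[of "-(P + 1) / (2 * X)"] True by simp
    qed
    then show ?thesis using True by (simp add: P_def X_def R_def)
  next
    case False
    then have "R > 0" using nonneg[of b] by (simp add: R_def)
    have "P + 2 * (-X / R) * X + (-X / R)\<^sup>2 * R = P - X\<^sup>2 / R"
      using \<open>R > 0\<close> by (simp add: field_simps power2_eq_square)
    then have "X\<^sup>2 / R \<le> P" using along_line[of "-X / R"] by simp
    then show ?thesis using \<open>R > 0\<close> by (simp add: field_simps P_def X_def R_def)
  qed
qed

lemma quadratic_eq_0_imp_eq_0:
  assumes "a \<bullet> F a = 0"
  shows "F a = 0"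
proof -
  have "(F a \<bullet> F a)\<^sup>2 \<le> 0"
    using cauchy_schwarz[of a "F a"] assms self_adjoint[of a "F a"] by (simp add: inner_commute)
  then show ?thesis by simp
qed

lemma sqrt_quadratic_triangle:
  "sqrt ((a + b) \<bullet> F (a + b)) \<le> sqrt (a \<bullet> F a) + sqrt (b \<bullet> F b)"
proof -
  have "a \<bullet> F b \<le> sqrt (a \<bullet> F a) * sqrt (b \<bullet> F b)"
    using real_le_rsqrt[OF cauchy_schwarz] by (simp add: real_sqrt_mult)
  then have "(a + b) \<bullet> F (a + b) \<le> (sqrt (a \<bullet> F a) + sqrt (b \<bullet> F b))\<^sup>2"
    unfolding quadratic_add using nonneg[of a] nonneg[of b] by (simp add: power2_sum)
  then show ?thesis
    using nonneg[of a] nonneg[of b] real_sqrt_le_mono by fastforce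
qed

lemma quadratic_add_le_weighted:
  assumes "1 < p"
  shows "(a + b) \<bullet> F (a + b) \<le> p * (a \<bullet> F a) + p / (p - 1) * (b \<bullet> F b)"
proof -
  have "(a + b) \<bullet> F (a + b) \<le> (sqrt (a \<bullet> F a) + sqrt (b \<bullet> F b))\<^sup>2"
    using sqrt_quadratic_triangle nonneg[of "a + b"] by (metis power_mono real_sqrt_ge_zero real_sqrt_pow2)
  also have "\<dots> \<le> p * (a \<bullet> F a) + p / (p - 1) * (b \<bullet> F b)"
    using add_square_le_weighted[OF assms, of "sqrt (a \<bullet> F a)" "sqrt (b \<bullet> F b)"]
      nonneg[of a] nonneg[of b] by simp
  finally show ?thesis .
qed

end

lemma symmetric_matrix_inner:
  fixes M :: "real^'n^'n"
  assumes "transpose M = M"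
  shows "(M *v a) \<bullet> b = a \<bullet> (M *v b)"
  by (metis assms dot_lmul_matrix inner_commute transpose_matrix_vector)

lemma psd_operator_matrix:
  fixes M :: "real^'n^'n"
  assumes "transpose M = M" and "\<And>v. 0 \<le> v \<bullet> (M *v v)"
  shows "psd_operator ((*v) M)"
proof (rule psd_operator.intro)
  show "linear ((*v) M)" by (rule matrix_vector_mul_linear)
qed (use assms symmetric_matrix_inner in auto)

lemma symmetric_matrix_rayleigh_max:
  fixes M :: "real^'n^'n"
  assumes sym: "transpose M = M"
  obtains \<mu> v0 where "v0 \<noteq> 0" "M *v v0 = \<mu> *s v0" "\<And>v. v \<bullet> (M *v v) \<le> \<mu> * (v \<bullet> v)"
proof -
  have "continuous_on (sphere 0 1) (\<lambda>v. v \<bullet> (M *v v))"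
    by (intro continuous_intros linear_continuous_on) (auto intro: bounded_linear_intros)
  then obtain v0 where v0: "v0 \<in> sphere 0 1"
    and max: "\<And>w. w \<in> sphere 0 1 \<Longrightarrow> w \<bullet> (M *v w) \<le> v0 \<bullet> (M *v v0)"
    using continuous_attains_sup[of "sphere (0::real^'n) 1"] by fastforce
  define \<mu> where "\<mu> = v0 \<bullet> (M *v v0)"
  have rayleigh: "v \<bullet> (M *v v) \<le> \<mu> * (v \<bullet> v)" for v
  proof (cases "v = 0")
    case False
    have "v \<bullet> (M *v v) / (norm v)\<^sup>2 = ((1 / norm v) *\<^sub>R v) \<bullet> (M *v ((1 / norm v) *\<^sub>R v))"
      by (simp add: matrix_vector_mult_scaleR power2_eq_square)
    also have "\<dots> \<le> \<mu>"
      using max[of "(1 / norm v) *\<^sub>R v"] False unfolding \<mu>_def by simp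
    finally show ?thesis
      using False by (simp add: pos_divide_le_eq power2_norm_eq_inner)
  qed simp
  \<comment> \<open>The maximiser is an eigenvector: \<open>\<mu> I - M\<close> is positive semidefinite and its
    quadratic form vanishes at \<open>v0\<close>.\<close>
  interpret gap: psd_operator "\<lambda>v. \<mu> *\<^sub>R v - M *v v"
  proof (rule psd_operator.intro)
    show "linear (\<lambda>v. \<mu> *\<^sub>R v - M *v v)"
      by (simp add: linear_iff algebra_simps)
  qed (use rayleigh symmetric_matrix_inner[OF sym] in \<open>auto simp: inner_diff_left inner_diff_right\<close>)
  have "v0 \<bullet> (\<mu> *\<^sub>R v0 - M *v v0) = 0"
    using v0 by (simp add: \<mu>_def inner_diff_right dot_square_norm)
  then have "\<mu> *\<^sub>R v0 - M *v v0 = 0"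
    by (rule gap.quadratic_eq_0_imp_eq_0)
  then have "M *v v0 = \<mu> *s v0"
    by (simp add: scalar_mult_eq_scaleR)
  moreover have "v0 \<noteq> 0" using v0 by auto
  ultimately show thesis using that rayleigh by blast
qed

lemma symmetric_matrix_eigenvalues_finite:
  fixes M :: "real^'n^'n"
  assumes sym: "transpose M = M"
  shows "finite {l. \<exists>v. v \<noteq> 0 \<and> M *v v = l *s v}"
proof -
  define E where "E = {l. \<exists>v. v \<noteq> 0 \<and> M *v v = l *s v}"
  define ev where "ev l = (SOME v. v \<noteq> 0 \<and> M *v v = l *s v)" for l
  have ev: "ev l \<noteq> 0 \<and> M *v ev l = l *s ev l" if "l \<in> E" for l
    using that unfolding ev_def E_def by (metis (mono_tags, lifting) mem_Collect_eq someI_ex)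
  have orthogonal: "ev l \<bullet> ev l' = 0" if "l \<in> E" "l' \<in> E" "l \<noteq> l'" for l l'
  proof -
    have "(M *v ev l) \<bullet> ev l' = ev l \<bullet> (M *v ev l')"
      by (rule symmetric_matrix_inner[OF sym])
    then have "l * (ev l \<bullet> ev l') = l' * (ev l \<bullet> ev l')"
      using ev[OF that(1)] ev[OF that(2)] by (simp add: scalar_mult_eq_scaleR)
    then show ?thesis using that(3) by simp
  qed
  have "inj_on ev E"
  proof (rule inj_onI)
    fix l l' assume "l \<in> E" "l' \<in> E" "ev l = ev l'"
    then have "l *s ev l = l' *s ev l" using ev by metis
    then show "l = l'" using ev[OF \<open>l \<in> E\<close>] by (simp add: scalar_mult_eq_scaleR)
  qed
  moreover have "independent (ev ` E)"
  proof (rule pairwise_orthogonal_independent)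
    show "pairwise orthogonal (ev ` E)"
      unfolding pairwise_def orthogonal_def using orthogonal by auto
    show "0 \<notin> ev ` E" using ev by auto
  qed
  then have "finite (ev ` E)" using independent_bound by blast
  ultimately show ?thesis using finite_imageD unfolding E_def by blast
qed

lemma lambda_max_eqI:
  fixes M :: "real^'n^'n"
  assumes "transpose M = M" and "v0 \<noteq> 0" "M *v v0 = \<mu> *s v0"
    and "\<And>v. v \<bullet> (M *v v) \<le> \<mu> * (v \<bullet> v)"
  shows "lambda_max M = \<mu>"
  unfolding lambda_max_def
proof (rule Max_eqI[OF symmetric_matrix_eigenvalues_finite[OF assms(1)]])
  fix l assume "l \<in> {l. \<exists>v. v \<noteq> 0 \<and> M *v v = l *s v}"
  then obtain v where "v \<noteq> 0" "M *v v = l *s v" by blast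
  then have "l * (v \<bullet> v) \<le> \<mu> * (v \<bullet> v)" "0 < v \<bullet> v"
    using assms(4)[of v] by (simp_all add: scalar_mult_eq_scaleR)
  then show "l \<le> \<mu>" by simp
qed (use assms in blast)

lemma lambda_max_eigenvector:
  fixes M :: "real^'n^'n"
  assumes "transpose M = M"
  obtains v where "v \<noteq> 0" "M *v v = lambda_max M *s v"
proof -
  obtain \<mu> v0 where "v0 \<noteq> 0" "M *v v0 = \<mu> *s v0" "\<And>v. v \<bullet> (M *v v) \<le> \<mu> * (v \<bullet> v)"
    using symmetric_matrix_rayleigh_max[OF assms] by blast
  with lambda_max_eqI[OF assms] that show thesis by blast
qed

lemma quadratic_le_lambda_max:
  fixes M :: "real^'n^'n"
  assumes "transpose M = M"
  shows "v \<bullet> (M *v v) \<le> lambda_max M * (v \<bullet> v)"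
proof -
  obtain \<mu> v0 where "v0 \<noteq> 0" "M *v v0 = \<mu> *s v0" "\<And>v. v \<bullet> (M *v v) \<le> \<mu> * (v \<bullet> v)"
    using symmetric_matrix_rayleigh_max[OF assms] by blast
  with lambda_max_eqI[OF assms] show ?thesis by simp
qed

lemma lambda_max_nonneg:
  fixes M :: "real^'n^'n"
  assumes "transpose M = M" and "\<And>v. 0 \<le> v \<bullet> (M *v v)"
  shows "0 \<le> lambda_max M"
proof -
  obtain v where "v \<noteq> 0" "M *v v = lambda_max M *s v"
    using lambda_max_eigenvector[OF assms(1)] .
  then have "0 \<le> lambda_max M * (v \<bullet> v)" "0 < v \<bullet> v"
    using assms(2)[of v] by (simp_all add: scalar_mult_eq_scaleR)
  then show ?thesis by (simp add: zero_le_mult_iff)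
qed

lemma inner_matrix_vector_le_lambda_max:
  fixes M :: "real^'n^'n"
  assumes sym: "transpose M = M" and psd: "\<And>v. 0 \<le> v \<bullet> (M *v v)"
  shows "(M *v v) \<bullet> (M *v v) \<le> lambda_max M * (v \<bullet> (M *v v))"
proof -
  interpret psd_operator "(*v) M" by (rule psd_operator_matrix[OF assms])
  define X where "X = (M *v v) \<bullet> (M *v v)"
  have "X\<^sup>2 \<le> (v \<bullet> (M *v v)) * ((M *v v) \<bullet> (M *v (M *v v)))"
    using cauchy_schwarz[of v "M *v v"] self_adjoint[of v "M *v v"] by (simp add: X_def)
  also have "\<dots> \<le> (v \<bullet> (M *v v)) * (lambda_max M * X)"
    using quadratic_le_lambda_max[OF sym] psd by (simp add: X_def mult_left_mono)
  finally have "X * X \<le> (lambda_max M * (v \<bullet> (M *v v))) * X"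
    by (simp add: power2_eq_square algebra_simps)
  moreover have "0 \<le> lambda_max M * (v \<bullet> (M *v v))"
    using lambda_max_nonneg[OF assms] psd by simp
  ultimately show ?thesis
    unfolding X_def by (metis inner_ge_zero mult_right_le_imp_le order_le_less)
qed

lemma matrix_inv_inverse:
  fixes M :: "real^'n^'n"
  assumes "invertible M"
  shows "M ** matrix_inv M = mat 1" and "matrix_inv M ** M = mat 1"
  using someI_ex[OF assms[unfolded invertible_def]] unfolding matrix_inv_def by auto

lemma pos_def_matrix_invertible:
  fixes M :: "real^'n^'n"
  assumes "\<And>v. v \<noteq> 0 \<Longrightarrow> 0 < v \<bullet> (M *v v)"
  shows "invertible M"
proof -
  have "\<forall>v. M *v v = 0 \<longrightarrow> v = 0"
    using assms by (metis inner_zero_right less_irrefl)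
  then show ?thesis
    by (simp add: invertible_left_inverse matrix_left_invertible_ker)
qed

lemma symmetric_matrix_inv:
  fixes M :: "real^'n^'n"
  assumes "invertible M" and "transpose M = M"
  shows "transpose (matrix_inv M) = matrix_inv M"
proof -
  let ?V = "matrix_inv M"
  have "transpose ?V ** M = mat 1"
    using matrix_inv_inverse(1)[OF assms(1)] assms(2) by (metis matrix_transpose_mul transpose_mat)
  have "transpose ?V = transpose ?V ** (M ** ?V)"
    by (simp add: matrix_inv_inverse(1)[OF assms(1)] matrix_mul_rid)
  also have "\<dots> = (transpose ?V ** M) ** ?V"
    by (simp add: matrix_mul_assoc)
  also have "\<dots> = ?V"
    using \<open>transpose ?V ** M = mat 1\<close> by (simp add: matrix_mul_lid)
  finally show ?thesis .
qed

lemma inner_le_lambda_max_matrix_inv: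
  fixes M :: "real^'n^'n"
  assumes sym: "transpose M = M" and pd: "\<And>v. v \<noteq> 0 \<Longrightarrow> 0 < v \<bullet> (M *v v)"
  shows "v \<bullet> v \<le> lambda_max (matrix_inv M) * (v \<bullet> (M *v v))"
proof -
  define V where "V = matrix_inv M"
  have inv: "invertible M" by (rule pos_def_matrix_invertible[OF pd])
  have VM: "V *v (M *v w) = w" and MV: "M *v (V *v w) = w" for w
    using matrix_inv_inverse[OF inv] by (simp_all add: V_def matrix_vector_mul_assoc)
  have V_sym: "transpose V = V"
    unfolding V_def by (rule symmetric_matrix_inv[OF inv sym])
  have V_psd: "0 \<le> w \<bullet> (V *v w)" for w
  proof -
    have "w \<bullet> (V *v w) = (V *v w) \<bullet> (M *v (V *v w))"
      by (simp add: MV inner_commute)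
    then show ?thesis
      using pd[of "V *v w"] by (cases "V *v w = 0") auto
  qed
  have "(V *v (M *v v)) \<bullet> (V *v (M *v v)) \<le> lambda_max V * ((M *v v) \<bullet> (V *v (M *v v)))"
    by (rule inner_matrix_vector_le_lambda_max[OF V_sym V_psd])
  then show ?thesis
    by (simp add: VM inner_commute flip: V_def)
qed

lemma lipschitz_on_UNIV_of_derivative_bound:
  fixes g g' :: "real \<Rightarrow> real"
  assumes "\<And>t. (g has_real_derivative g' t) (at t)" and "\<And>t. \<bar>g' t\<bar> \<le> C"
  shows "C-lipschitz_on UNIV g"
proof (rule lipschitz_onI)
  show "dist (g s) (g t) \<le> C * dist s t" for s t
    using field_differentiable_bound[OF convex_UNIV, of g g' C s t] assms
    by (simp add: dist_real_def)
  show "0 \<le> C"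
    using assms(2)[of 0] by simp
qed

lemma lipschitz_on_grad:
  fixes f' :: "'n::finite \<Rightarrow> real \<Rightarrow> real"
  assumes "\<And>i. L-lipschitz_on UNIV (f' i)"
  shows "L-lipschitz_on UNIV (grad f')"
proof (rule lipschitz_onI)
  show L_nonneg: "0 \<le> L"
    using assms lipschitz_on_nonneg by blast
  fix a b :: "real^'n"
  have "dist (grad f' a) (grad f' b) = L2_set (\<lambda>i. dist (f' i (a $ i)) (f' i (b $ i))) UNIV"
    by (simp add: dist_vec_def grad_def)
  also have "\<dots> \<le> L2_set (\<lambda>i. L * dist (a $ i) (b $ i)) UNIV"
    by (rule L2_set_mono) (simp_all add: lipschitz_onD[OF assms])
  also have "\<dots> = L * dist a b"
    by (simp add: dist_vec_def L2_set_right_distrib[OF L_nonneg])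
  finally show "dist (grad f' a) (grad f' b) \<le> L * dist a b" .
qed

locale flexpd_inner_loop =
  fixes \<alpha> \<beta> p L :: real
    and A :: "real^'n::finite^'e::finite" and B :: "real^'n^'n"
    and f' :: "'n \<Rightarrow> real \<Rightarrow> real" and xs :: "real^'n" and ls :: "real^'e"
  assumes \<alpha>_pos: "0 < \<alpha>" and \<beta>_pos: "0 < \<beta>" and p_gt_1: "1 < p"
    and B_sym: "transpose B = B" and B_psd: "\<And>v. 0 \<le> v \<bullet> (B *v v)"
    and U_pos_def: "\<And>v. v \<noteq> 0 \<Longrightarrow> 0 < qnorm (mat 1 - \<alpha> *\<^sub>R B) v"
    and f'_lipschitz: "\<And>i. L-lipschitz_on UNIV (f' i)"
    and KKT: "grad f' xs + transpose A *v ls = 0"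
    and B_xs: "B *v xs = 0"
begin

abbreviation U :: "real^'n^'n" where
  "U \<equiv> mat 1 - \<alpha> *\<^sub>R B"

abbreviation primal_gain :: real where
  "primal_gain \<equiv> sqrt (lambda_max U) + \<alpha> * L * sqrt (lambda_max (matrix_inv U))"

abbreviation dual_gain :: real where
  "dual_gain \<equiv> 1 + p * \<alpha> * \<beta> * lambda_max (A ** transpose A) / (p - 1)"

abbreviation Gamma :: real where
  "Gamma \<equiv> max dual_gain (p * primal_gain\<^sup>2)"

lemma U_mult: "U *v v = v - \<alpha> *\<^sub>R (B *v v)"
  by (simp add: matrix_vector_mult_diff_rdistrib scaleR_matrix_vector_assoc[symmetric])

lemma U_sym: "transpose U = U"
  using B_sym by (simp add: transpose_def vec_eq_iff mat_def)

lemma U_psd: "0 \<le> v \<bullet> (U *v v)"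
  using U_pos_def[of v] by (cases "v = 0") (auto simp: qnorm_def)

sublocale U: psd_operator "(*v) U"
  by (rule psd_operator_matrix[OF U_sym U_psd])

lemma grad_lipschitz: "L-lipschitz_on UNIV (grad f')"
  by (rule lipschitz_on_grad) (rule f'_lipschitz)

lemma qnorm_U_le_inner: "qnorm U v \<le> v \<bullet> v"
  using \<alpha>_pos B_psd[of v] by (simp add: qnorm_def U_mult inner_diff_right)

lemma inner_le_qnorm_U: "v \<bullet> v \<le> lambda_max (matrix_inv U) * qnorm U v"
  unfolding qnorm_def
  by (rule inner_le_lambda_max_matrix_inv[OF U_sym]) (use U_pos_def in \<open>simp add: qnorm_def\<close>)

lemma qnorm_U_mult_le: "qnorm U (U *v v) \<le> lambda_max U * qnorm U v"
proof -
  have "qnorm U (U *v v) \<le> (U *v v) \<bullet> (U *v v)"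
    by (rule qnorm_U_le_inner)
  also have "\<dots> \<le> lambda_max U * qnorm U v"
    unfolding qnorm_def by (rule inner_matrix_vector_le_lambda_max[OF U_sym U_psd])
  finally show ?thesis .
qed

lemma qnorm_U_grad_diff_le:
  "qnorm U (grad f' y - grad f' xs) \<le> L\<^sup>2 * lambda_max (matrix_inv U) * qnorm U (y - xs)"
proof -
  have "qnorm U (grad f' y - grad f' xs) \<le> (norm (grad f' y - grad f' xs))\<^sup>2"
    using qnorm_U_le_inner by (simp add: power2_norm_eq_inner)
  also have "\<dots> \<le> (L * norm (y - xs))\<^sup>2"
    using lipschitz_on_normD[OF grad_lipschitz] by (simp add: power_mono)
  also have "\<dots> \<le> L\<^sup>2 * (lambda_max (matrix_inv U) * qnorm U (y - xs))"
    using inner_le_qnorm_U by (simp add: power_mult_distrib power2_norm_eq_inner mult_left_mono)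
  finally show ?thesis by (simp add: mult.assoc)
qed

lemma qnorm_U_transpose_A_le:
  "qnorm U (transpose A *v w) \<le> lambda_max (A ** transpose A) * (norm w)\<^sup>2"
proof -
  have "qnorm U (transpose A *v w) \<le> (transpose A *v w) \<bullet> (transpose A *v w)"
    by (rule qnorm_U_le_inner)
  also have "\<dots> = w \<bullet> ((A ** transpose A) *v w)"
    by (simp add: dot_lmul_matrix matrix_vector_mul_assoc[symmetric])
  also have "\<dots> \<le> lambda_max (A ** transpose A) * (norm w)\<^sup>2"
    using quadratic_le_lambda_max[of "A ** transpose A" w]
    by (simp add: matrix_transpose_mul power2_norm_eq_inner)
  finally show ?thesis .
qed

lemma qnorm_primal_step_le:
  "qnorm U (U *v (y - xs) - \<alpha> *\<^sub>R (grad f' y - grad f' xs)) \<le> primal_gain\<^sup>2 * qnorm U (y - xs)"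
proof -
  define e d where "e = y - xs" and "d = grad f' y - grad f' xs"
  have L_nonneg: "0 \<le> L"
    using f'_lipschitz lipschitz_on_nonneg by blast
  have "sqrt (qnorm U (U *v e)) \<le> sqrt (lambda_max U) * sqrt (qnorm U e)"
    using qnorm_U_mult_le by (simp add: real_sqrt_mult[symmetric])
  moreover have "sqrt (qnorm U ((-\<alpha>) *\<^sub>R d)) \<le> \<alpha> * L * sqrt (lambda_max (matrix_inv U)) * sqrt (qnorm U e)"
  proof -
    have "qnorm U ((-\<alpha>) *\<^sub>R d) \<le> (\<alpha> * L)\<^sup>2 * (lambda_max (matrix_inv U) * qnorm U e)"
      using qnorm_U_grad_diff_le[of y] \<alpha>_pos unfolding qnorm_def U.quadratic_scaleR
      by (simp add: d_def e_def power_mult_distrib mult.assoc)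
    then have "sqrt (qnorm U ((-\<alpha>) *\<^sub>R d))
        \<le> sqrt ((\<alpha> * L)\<^sup>2 * (lambda_max (matrix_inv U) * qnorm U e))"
      by (rule real_sqrt_le_mono)
    also have "\<dots> = \<alpha> * L * sqrt (lambda_max (matrix_inv U)) * sqrt (qnorm U e)"
      using \<alpha>_pos L_nonneg by (simp add: real_sqrt_mult)
    finally show ?thesis .
  qed
  ultimately have "sqrt (qnorm U (U *v e + (-\<alpha>) *\<^sub>R d)) \<le> primal_gain * sqrt (qnorm U e)"
    using U.sqrt_quadratic_triangle[of "U *v e" "(-\<alpha>) *\<^sub>R d"]
    by (simp add: qnorm_def algebra_simps)
  then have "qnorm U (U *v e + (-\<alpha>) *\<^sub>R d) \<le> (primal_gain * sqrt (qnorm U e))\<^sup>2"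
    using U_psd by (metis power_mono qnorm_def real_sqrt_ge_zero real_sqrt_pow2)
  then show ?thesis
    using U_psd by (simp add: e_def d_def qnorm_def power_mult_distrib)
qed

lemma inner_step_error:
  "flexpd_inner \<alpha> B f' A lam x (Suc t) - xs
     = (U *v (y - xs) - \<alpha> *\<^sub>R (grad f' y - grad f' xs)) + (-\<alpha>) *\<^sub>R (transpose A *v (lam - ls))"
  if "y = flexpd_inner \<alpha> B f' A lam x t"
proof -
  have "U *v xs = xs"
    using B_xs by (simp add: U_mult)
  moreover have "grad f' xs = - (transpose A *v ls)"
    using KKT by (simp add: eq_neg_iff_add_eq_0)
  ultimately show ?thesis
    using that by (simp add: Let_def matrix_vector_mult_diff_distrib algebra_simps)
qed

lemma inner_step_contraction:
  fixes lam :: "real^'e" and x :: "real^'n"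
  defines "c \<equiv> \<alpha> / \<beta> * (norm (lam - ls))\<^sup>2"
  shows "qnorm U (flexpd_inner \<alpha> B f' A lam x (Suc t) - xs) + c
     \<le> Gamma * (qnorm U (flexpd_inner \<alpha> B f' A lam x t - xs) + c)"
proof -
  define y where "y = flexpd_inner \<alpha> B f' A lam x t"
  define a where "a = U *v (y - xs) - \<alpha> *\<^sub>R (grad f' y - grad f' xs)"
  define b where "b = (-\<alpha>) *\<^sub>R (transpose A *v (lam - ls))"
  define \<rho>A where "\<rho>A = lambda_max (A ** transpose A)"
  define N where "N = (norm (lam - ls))\<^sup>2"
  have "qnorm U (flexpd_inner \<alpha> B f' A lam x (Suc t) - xs) \<le> p * qnorm U a + p / (p - 1) * qnorm U b"
    using U.quadratic_add_le_weighted[OF p_gt_1, of a b] inner_step_error[OF y_def]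
    by (simp add: qnorm_def a_def b_def)
  also have "\<dots> \<le> p * (primal_gain\<^sup>2 * qnorm U (y - xs)) + p / (p - 1) * (\<alpha>\<^sup>2 * (\<rho>A * N))"
  proof (rule add_mono)
    show "p * qnorm U a \<le> p * (primal_gain\<^sup>2 * qnorm U (y - xs))"
      using qnorm_primal_step_le p_gt_1 by (simp add: a_def)
    have "qnorm U b \<le> \<alpha>\<^sup>2 * (\<rho>A * N)"
      using qnorm_U_transpose_A_le[of "lam - ls"] unfolding b_def qnorm_def U.quadratic_scaleR \<rho>A_def N_def
      by (simp add: mult_left_mono)
    then show "p / (p - 1) * qnorm U b \<le> p / (p - 1) * (\<alpha>\<^sup>2 * (\<rho>A * N))"
      using p_gt_1 by (intro mult_left_mono) auto
  qed
  also have "p / (p - 1) * (\<alpha>\<^sup>2 * (\<rho>A * N)) = (dual_gain - 1) * c"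
    unfolding c_def N_def[symmetric] \<rho>A_def[symmetric] using \<beta>_pos p_gt_1
    by (simp add: field_simps power2_eq_square)
  also have "p * (primal_gain\<^sup>2 * qnorm U (y - xs)) + (dual_gain - 1) * c
      \<le> Gamma * qnorm U (y - xs) + (Gamma - 1) * c"
  proof (rule add_mono)
    show "p * (primal_gain\<^sup>2 * qnorm U (y - xs)) \<le> Gamma * qnorm U (y - xs)"
      unfolding mult.assoc[symmetric] using U_psd[of "y - xs"]
      by (intro mult_right_mono) (auto simp: qnorm_def)
    show "(dual_gain - 1) * c \<le> (Gamma - 1) * c"
      using \<alpha>_pos \<beta>_pos by (intro mult_right_mono) (auto simp: c_def)
  qed
  finally show ?thesis
    unfolding y_def[symmetric] distrib_left left_diff_distrib by linarith
qed

lemma inner_loop_contraction: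
  "qnorm U (flexpd_inner \<alpha> B f' A lam x t - xs) + \<alpha> / \<beta> * (norm (lam - ls))\<^sup>2
     \<le> Gamma ^ t * (qnorm U (x - xs) + \<alpha> / \<beta> * (norm (lam - ls))\<^sup>2)"
proof (induction t)
  case (Suc t)
  have "0 \<le> Gamma"
    using p_gt_1 by (intro order_trans[OF _ max.cobounded2]) simp
  have "qnorm U (flexpd_inner \<alpha> B f' A lam x (Suc t) - xs) + \<alpha> / \<beta> * (norm (lam - ls))\<^sup>2
      \<le> Gamma * (qnorm U (flexpd_inner \<alpha> B f' A lam x t - xs) + \<alpha> / \<beta> * (norm (lam - ls))\<^sup>2)"
    by (rule inner_step_contraction)
  also have "\<dots> \<le> Gamma * (Gamma ^ t * (qnorm U (x - xs) + \<alpha> / \<beta> * (norm (lam - ls))\<^sup>2))"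
    using Suc.IH \<open>0 \<le> Gamma\<close> by (rule mult_left_mono)
  finally show ?case
    by (simp add: mult.assoc)
qed simp

end

theorem lemma3p3:
  fixes src dst :: "'e::finite \<Rightarrow> 'n::finite"
    and f f' f'' :: "'n \<Rightarrow> real \<Rightarrow> real"
    and m L \<alpha> \<beta> p :: real and T :: nat
    and A :: "real^'n^'e" and B :: "real^'n^'n"
    and xs :: "real^'n" and ls :: "real^'e"
    and x :: "nat \<Rightarrow> real^'n" and lam :: "nat \<Rightarrow> real^'e"
    and k :: nat
  assumes loopfree: "\<And>e. src e \<noteq> dst e"
    and simple: "inj (\<lambda>e. {src e, dst e})"
    and connected: "\<And>i j. (adjacent src dst)\<^sup>*\<^sup>* i j"
    and A_def: "A = incidence src dst"
    and f1: "\<And>i t. (f i has_real_derivative f' i t) (at t)"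
    and f2: "\<And>i t. (f' i has_real_derivative f'' i t) (at t)"
    and m_pos: "0 < m" and mL: "m \<le> L"
    and f''_bounds: "\<And>i t. m \<le> f'' i t \<and> f'' i t \<le> L"
    and B_sym: "transpose B = B"
    and B_psd: "\<And>v. 0 \<le> v \<bullet> (B *v v)"
    and B_null: "{v. B *v v = 0} = {v. A *v v = 0}"
    and B_sparse: "\<And>i j. i \<noteq> j \<Longrightarrow> B $ i $ j \<noteq> 0 \<Longrightarrow> adjacent src dst i j"
    and xs_feas: "A *v xs = 0"
    and xs_unique_min: "\<And>y. A *v y = 0 \<Longrightarrow> y \<noteq> xs \<Longrightarrow> fsum f xs < fsum f y"
    and ls_KKT: "grad f' xs + transpose A *v ls = 0"
    and xs_B: "B *v xs = 0"
    and ls_range: "\<exists>z. ls = A *v z"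
    and \<alpha>_pos: "0 < \<alpha>" and \<beta>_pos: "0 < \<beta>" and T_pos: "1 \<le> T"
    and lam0: "lam 0 = 0"
    and x_step: "\<And>j. x (Suc j) = flexpd_inner \<alpha> B f' A (lam j) (x j) T"
    and lam_step: "\<And>j. lam (Suc j) = lam j + \<beta> *\<^sub>R (A *v x (Suc j))"
    and U_pd: "\<And>v. v \<noteq> 0 \<Longrightarrow> 0 < qnorm (mat 1 - \<alpha> *\<^sub>R B) v"
    and p_gt: "1 < p"
  shows "(let U = mat 1 - \<alpha> *\<^sub>R B;
             \<Gamma> = max (1 + p * \<alpha> * \<beta> * lambda_max (A ** transpose A) / (p - 1))
                     (p * (sqrt (lambda_max U) + \<alpha> * L * sqrt (lambda_max (matrix_inv U)))\<^sup>2)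
         in qnorm U (flexpd_inner \<alpha> B f' A (lam k) (x k) (T - 1) - xs)
              + \<alpha> / \<beta> * (norm (lam k - ls))\<^sup>2
            \<le> \<Gamma> ^ (T - 1) * (qnorm U (x k - xs) + \<alpha> / \<beta> * (norm (lam k - ls))\<^sup>2))"
proof -
  \<comment> \<open>The bound concerns a single inner loop, started from arbitrary \<open>x k\<close> and \<open>lam k\<close>.\<close>
  have "L-lipschitz_on UNIV (f' i)" for i
  proof (rule lipschitz_on_UNIV_of_derivative_bound[OF f2])
    show "\<bar>f'' i t\<bar> \<le> L" for t
      using f''_bounds[of i t] m_pos by (simp add: abs_le_iff)
  qed
  then interpret flexpd_inner_loop \<alpha> \<beta> p L A B f' xs ls
    using \<alpha>_pos \<beta>_pos p_gt B_sym B_psd U_pd ls_KKT xs_B by unfold_locales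
  show ?thesis
    using inner_loop_contraction[of "lam k" "x k" "T - 1"] by (simp add: Let_def)
qed

end
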